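(* In the setting described in the context, for every $k\in\mathbb N$, \[ \|H^{(k)}-U\|_{L_{2,\pi}\to L_{2,\pi}}\le \beta_k:=\sup_{x\in K}\Big(\int_0^{\rho(x)}\|H_t^k-U_t\|^2_{L_{2,t}\to L_{2,t}}\,\frac{\mathrm dt}{\rho(x)}\Big)^{1/2}. \]
   Context: Let $K\subseteq\mathbb R^d$ be Borel and $\rho:K\to[0,\infty)$ measurable with $0<\int_K\rho\,\mathrm dx<\infty$; $\pi(A)=\int_A\rho\,\mathrm dx/\int_K\rho\,\mathrm dx$. For $t\ge0$, $K(t)=\{x\in K:\rho(x)\ge t\}$, assume $0<\mathrm{vol}_d(K(t))<\infty$ for $t\in(0,\|\rho\|_\infty)$, and $U_t$ is the uniform distribution on $K(t)$. For each $t$, $H_t$ is a Markov kernel on $K(t)$ (extended by $0$ outside $K(t)$, measurable in $(t,x)$), reversible with respect to $U_t$. $L_{2,\pi}=L_2(K,\pi)$, $L_{2,t}=L_2(K(t),U_t)$; $H_t$ acts on $L_{2,t}$ by $H_tf(x)=\int f(y)H_t(x,\mathrm dy)$ and $U_t$ acts by $f\mapsto U_t(f)=\int f\,\mathrm dU_t$ (a constant function). For $k\in\mathbb N$ define $H^{(k)}f(x)=\frac1{\rho(x)}\int_0^{\rho(x)}H_t^kf(x)\,\mathrm dt$ on $L_{2,\pi}$ (so $H^{(1)}=H$ is the hybrid slice sampler), and the simple slice sampler $Uf(x)=\frac1{\rho(x)}\int_0^{\rho(x)}U_t(f)\,\mathrm dt$. *)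

theory Defs
  imports "HOL-Probability.Probability"
begin

definition lvl :: "'a set \<Rightarrow> ('a \<Rightarrow> real) \<Rightarrow> real \<Rightarrow> 'a set" where
  "lvl K \<rho> t = {x\<in>K. t \<le> \<rho> x}"

definition unif :: "'a::euclidean_space set \<Rightarrow> ('a \<Rightarrow> real) \<Rightarrow> real \<Rightarrow> 'a measure" where
  "unif K \<rho> t = uniform_measure lborel (lvl K \<rho> t)"

definition normconst :: "'a::euclidean_space set \<Rightarrow> ('a \<Rightarrow> real) \<Rightarrow> real" where
  "normconst K \<rho> = enn2real (\<integral>\<^sup>+x. ennreal (indicator K x * \<rho> x) \<partial>lborel)"

definition target :: "'a::euclidean_space set \<Rightarrow> ('a \<Rightarrow> real) \<Rightarrow> 'a measure" where
  "target K \<rho> = density lborel (\<lambda>x. ennreal (indicator K x * \<rho> x / normconst K \<rho>))"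

definition ennsqrt :: "ennreal \<Rightarrow> ennreal" where
  "ennsqrt a = (if a = \<top> then \<top> else ennreal (sqrt (enn2real a)))"

definition l2norm :: "'a measure \<Rightarrow> ('a \<Rightarrow> real) \<Rightarrow> ennreal" where
  "l2norm M f = ennsqrt (\<integral>\<^sup>+x. ennreal ((f x)\<^sup>2) \<partial>M)"

definition opnorm :: "'a measure \<Rightarrow> (('a \<Rightarrow> real) \<Rightarrow> ('a \<Rightarrow> real)) \<Rightarrow> ennreal" where
  "opnorm M A = (SUP f \<in> {f \<in> borel_measurable M. l2norm M f \<le> 1}. l2norm M (A f))"

definition kop :: "('a \<Rightarrow> 'a measure) \<Rightarrow> ('a \<Rightarrow> real) \<Rightarrow> ('a \<Rightarrow> real)" where
  "kop P f = (\<lambda>x. \<integral>y. f y \<partial>(P x))"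

definition kpow :: "('a \<Rightarrow> 'a measure) \<Rightarrow> nat \<Rightarrow> ('a \<Rightarrow> real) \<Rightarrow> ('a \<Rightarrow> real)" where
  "kpow P k = (kop P ^^ k)"

definition hybk :: "'a::euclidean_space set \<Rightarrow> ('a \<Rightarrow> real) \<Rightarrow> (real \<Rightarrow> 'a \<Rightarrow> 'a measure) \<Rightarrow> nat
    \<Rightarrow> ('a \<Rightarrow> real) \<Rightarrow> ('a \<Rightarrow> real)" where
  "hybk K \<rho> H k f = (\<lambda>x. (1 / \<rho> x) * set_lebesgue_integral lborel {0..\<rho> x} (\<lambda>t. kpow (H t) k f x))"

definition simple_slice :: "'a::euclidean_space set \<Rightarrow> ('a \<Rightarrow> real) \<Rightarrow> ('a \<Rightarrow> real) \<Rightarrow> ('a \<Rightarrow> real)" where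
  "simple_slice K \<rho> f = (\<lambda>x. (1 / \<rho> x) * set_lebesgue_integral lborel {0..\<rho> x} (\<lambda>t. integral\<^sup>L (unif K \<rho> t) f))"

end

theory Submission imports Defs begin

(* Fix f with \<parallel>f\<parallel>_\<pi> \<le> 1 and write D = H^(k) f - U f and G(t,x) = H_t^k f(x) - U_t(f).
   Since \<rho>(x) D(x) = \<integral>_0^\<rho>(x) G(t,x) dt, Cauchy-Schwarz gives \<rho>(x) D(x)^2 \<le> \<integral>_0^\<rho>(x) G(t,x)^2 dt.
   Integrating over K and exchanging the order of integration over the region
   {(t,x). x \<in> K, 0 \<le> t \<le> \<rho>(x)} = {(t,x). t \<ge> 0, x \<in> K(t)} turns the left side into
   Z \<parallel>D\<parallel>_\<pi>^2 (Z the normalising constant) and the right side into \<integral>_0^\<infinity> \<integral>_K(t) G(t,x)^2 dx dt.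
   On each level set, \<integral>_K(t) G(t,-)^2 \<le> \<parallel>H_t^k - U_t\<parallel>^2 \<integral>_K(t) f^2; exchanging the integrals back
   bounds everything by \<integral>_K f(x)^2 \<integral>_0^\<rho>(x) \<parallel>H_t^k - U_t\<parallel>^2 dt dx \<le> \<beta>_k^2 Z \<parallel>f\<parallel>_\<pi>^2.

   Three technical points: t \<mapsto> \<parallel>H_t^k - U_t\<parallel> need not be
   measurable, so the per-level estimate is routed through the measurable ratio
   \<integral>_K(t) G^2 / \<integral>_K(t) f^2; reversibility is used only to see that H_t maps U_t-null
   functions to U_t-null functions, which handles levels on which f vanishes; and splitting
   the integral defining H^(k) f(x) needs t \<mapsto> U_t(f) square integrable on the slice, which
   follows from Jensen's inequality. *)

lemma ennsqrt_sq: "(ennsqrt a)\<^sup>2 = a"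
proof (cases "a = \<top>")
  case False
  then obtain r where "a = ennreal r" "0 \<le> r" by (cases a) auto
  then show ?thesis by (simp add: ennsqrt_def ennreal_power)
qed (simp add: ennsqrt_def)

lemma ennsqrt_of_sq: "ennsqrt (b\<^sup>2) = b"
proof (cases "b = \<top>")
  case False
  then obtain r where "b = ennreal r" "0 \<le> r" by (cases b) auto
  then show ?thesis by (simp add: ennsqrt_def ennreal_power)
qed (simp add: ennsqrt_def)

lemma ennsqrt_mono: "a \<le> b \<Longrightarrow> ennsqrt a \<le> ennsqrt b"
proof (cases "b = \<top>")
  case False
  assume ab: "a \<le> b"
  obtain r where r: "b = ennreal r" "0 \<le> r" using False by (cases b) auto
  with ab obtain q where "a = ennreal q" "0 \<le> q" "q \<le> r"
    by (cases a) (auto simp: ennreal_le_iff top_unique)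
  then show ?thesis using r by (simp add: ennsqrt_def real_sqrt_le_iff)
qed (simp add: ennsqrt_def)

lemma ennsqrt_le_iff: "ennsqrt a \<le> b \<longleftrightarrow> a \<le> b\<^sup>2"
proof
  assume "ennsqrt a \<le> b"
  then have "(ennsqrt a)\<^sup>2 \<le> b\<^sup>2" by (rule power_mono) simp
  then show "a \<le> b\<^sup>2" by (simp add: ennsqrt_sq)
next
  assume "a \<le> b\<^sup>2"
  then have "ennsqrt a \<le> ennsqrt (b\<^sup>2)" by (rule ennsqrt_mono)
  then show "ennsqrt a \<le> b" by (simp add: ennsqrt_of_sq)
qed

lemma l2norm_le_iff: "l2norm M f \<le> b \<longleftrightarrow> (\<integral>\<^sup>+x. ennreal ((f x)\<^sup>2) \<partial>M) \<le> b\<^sup>2"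
  unfolding l2norm_def by (rule ennsqrt_le_iff)

lemma ennreal_divide_antimono:
  fixes x a b :: ennreal
  assumes b: "0 < b" and ba: "b \<le> a"
  shows "x / a \<le> x / b"
proof -
  have "inverse a \<le> inverse b"
  proof (cases "a = \<top>")
    case False
    then obtain p where p: "a = ennreal p" "0 \<le> p" by (cases a) auto
    with ba obtain q where q: "b = ennreal q" "0 \<le> q" "q \<le> p" by (cases b) (auto simp: top_unique)
    with b have "0 < q" by auto
    then show ?thesis using p q by (simp add: inverse_ennreal ennreal_leI le_imp_inverse_le)
  qed simp
  then show ?thesis unfolding divide_ennreal_def by (rule mult_left_mono) simp
qed

text \<open>The pointwise bound showing that a square-integrable function is integrable on a set
  of finite measure.\<close>
lemma abs_le_one_plus_square: "\<bar>y::real\<bar> \<le> 1 + y\<^sup>2"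
proof (cases "\<bar>y\<bar> \<le> 1")
  case False
  then have "\<bar>y\<bar> * 1 \<le> \<bar>y\<bar> * \<bar>y\<bar>" by (intro mult_left_mono) auto
  then show ?thesis by (simp add: power2_eq_square abs_mult_self_eq)
qed (simp add: add_increasing2)

text \<open>On a set A of finite measure a square-integrable function is integrable and
  (\<integral>_A g)^2 \<le> \<mu>(A) \<integral>_A g^2.  The inequality is the positivity of \<integral>(\<mu>(A) g - (\<integral>_A g) 1_A)^2.\<close>
lemma cauchy_schwarz_set:
  fixes g :: "'b \<Rightarrow> real"
  assumes A: "A \<in> sets M" and fin: "emeasure M A < \<infinity>" and g: "g \<in> borel_measurable M"
    and sq: "(\<integral>\<^sup>+x. indicator A x * ennreal ((g x)\<^sup>2) \<partial>M) < \<infinity>"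
  shows "set_integrable M A g"
    and "ennreal ((LINT x:A|M. g x)\<^sup>2) \<le> emeasure M A * (\<integral>\<^sup>+x. indicator A x * ennreal ((g x)\<^sup>2) \<partial>M)"
proof -
  define h where "h x = indicator A x * g x" for x
  have hm: "h \<in> borel_measurable M" unfolding h_def using A g by measurable
  have sq_eq: "indicator A x * ennreal ((g x)\<^sup>2) = ennreal ((h x)\<^sup>2)" for x
    by (cases "x \<in> A") (simp_all add: h_def)
  have h2: "integrable M (\<lambda>x. (h x)\<^sup>2)"
    unfolding integrable_iff_bounded using hm sq by (simp add: sq_eq)
  have ind: "integrable M (indicator A :: _ \<Rightarrow> real)" using A fin by simp
  have hi: "integrable M h"
  proof (rule Bochner_Integration.integrable_bound[OF Bochner_Integration.integrable_add[OF ind h2] hm])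
    show "AE x in M. norm (h x) \<le> norm (indicator A x + (h x)\<^sup>2)"
      using abs_le_one_plus_square by (intro AE_I2) (auto simp: h_def split: split_indicator)
  qed
  then show "set_integrable M A g" unfolding set_integrable_def h_def by simp
  define m where "m = measure M A"
  define I where "I = integral\<^sup>L M h"
  define Q where "Q = integral\<^sup>L M (\<lambda>x. (h x)\<^sup>2)"
  have m0: "0 \<le> m" unfolding m_def by simp
  have Q0: "0 \<le> Q" unfolding Q_def by (intro integral_nonneg_AE) simp
  have key: "I\<^sup>2 \<le> m * Q"
  proof (cases "m = 0")
    case True
    then have "emeasure M A = 0" using fin unfolding m_def
      by (simp add: emeasure_eq_ennreal_measure less_top)
    then have "AE x in M. x \<notin> A" using A by (intro AE_not_in) (simp add: null_sets_def)
    then have "AE x in M. h x = 0" by (rule AE_mp) (intro AE_I2, simp add: h_def)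
    then have "I = 0" unfolding I_def by (rule integral_eq_zero_AE)
    then show ?thesis using True by simp
  next
    case False
    have expand: "(m * h x - I * indicator A x)\<^sup>2 = m\<^sup>2 * (h x)\<^sup>2 - 2 * m * I * h x + I\<^sup>2 * indicator A x" for x
      by (cases "x \<in> A") (simp_all add: h_def power2_eq_square algebra_simps)
    have "0 \<le> integral\<^sup>L M (\<lambda>x. (m * h x - I * indicator A x)\<^sup>2)"
      by (intro integral_nonneg_AE) simp
    also have "\<dots> = integral\<^sup>L M (\<lambda>x. m\<^sup>2 * (h x)\<^sup>2 - 2 * m * I * h x + I\<^sup>2 * indicator A x)"
      by (simp only: expand)
    also have "\<dots> = m\<^sup>2 * Q - 2 * m * I * I + I\<^sup>2 * m"
      using h2 hi ind A unfolding Q_def I_def m_def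
      by (simp add: Bochner_Integration.integral_add Bochner_Integration.integral_diff
          Int_absorb2 sets.sets_into_space)
    finally have "0 \<le> m * (m * Q - I\<^sup>2)" by (simp add: power2_eq_square algebra_simps)
    then show ?thesis using False m0 by (simp add: zero_le_mult_iff)
  qed
  have "(\<integral>\<^sup>+x. indicator A x * ennreal ((g x)\<^sup>2) \<partial>M) = ennreal Q"
    unfolding sq_eq Q_def by (rule nn_integral_eq_integral[OF h2]) simp
  moreover have "emeasure M A = ennreal m" using fin unfolding m_def
    by (simp add: emeasure_eq_ennreal_measure less_top)
  moreover have "(LINT x:A|M. g x) = I" unfolding set_lebesgue_integral_def I_def h_def by simp
  ultimately show "ennreal ((LINT x:A|M. g x)\<^sup>2) \<le> emeasure M A * (\<integral>\<^sup>+x. indicator A x * ennreal ((g x)\<^sup>2) \<partial>M)"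
    using key m0 Q0 by (simp add: ennreal_mult[symmetric] ennreal_leI)
qed

lemma jensen_square:
  fixes f :: "'b \<Rightarrow> real"
  assumes M: "prob_space M" and f: "f \<in> borel_measurable M"
  shows "ennreal ((integral\<^sup>L M f)\<^sup>2) \<le> (\<integral>\<^sup>+x. ennreal ((f x)\<^sup>2) \<partial>M)"
proof (cases "(\<integral>\<^sup>+x. ennreal ((f x)\<^sup>2) \<partial>M) < \<infinity>")
  case True
  interpret prob_space M by (rule M)
  have on_space: "(\<integral>\<^sup>+x. indicator (space M) x * ennreal ((f x)\<^sup>2) \<partial>M) = (\<integral>\<^sup>+x. ennreal ((f x)\<^sup>2) \<partial>M)"
    by (intro nn_integral_cong) simp
  have "(LINT x:space M|M. f x) = integral\<^sup>L M f"
    unfolding set_lebesgue_integral_def by (intro Bochner_Integration.integral_cong) simp_all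
  with cauchy_schwarz_set(2)[OF sets.top _ f] True show ?thesis
    by (simp add: on_space emeasure_space_1)
qed (simp add: top_unique less_top[symmetric])

lemma nn_integral_square_scale:
  assumes "g \<in> borel_measurable M"
  shows "(\<integral>\<^sup>+y. ennreal ((c * g y)\<^sup>2) \<partial>M) = ennreal (c\<^sup>2) * (\<integral>\<^sup>+y. ennreal ((g y)\<^sup>2) \<partial>M)"
proof -
  have "(\<integral>\<^sup>+y. ennreal ((c * g y)\<^sup>2) \<partial>M) = (\<integral>\<^sup>+y. ennreal (c\<^sup>2) * ennreal ((g y)\<^sup>2) \<partial>M)"
    by (intro nn_integral_cong) (simp add: ennreal_mult[symmetric] power_mult_distrib)
  also have "\<dots> = ennreal (c\<^sup>2) * (\<integral>\<^sup>+y. ennreal ((g y)\<^sup>2) \<partial>M)"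
    using assms by (intro nn_integral_cmult) simp
  finally show ?thesis .
qed

text \<open>For a homogeneous operator the operator norm bounds \<parallel>A f\<parallel>^2 / \<parallel>f\<parallel>^2 whenever
  0 < \<parallel>f\<parallel> < \<infinity>: apply the definition to f / \<parallel>f\<parallel>.\<close>
lemma opnorm_bound:
  fixes A :: "('b \<Rightarrow> real) \<Rightarrow> ('b \<Rightarrow> real)"
  assumes f: "f \<in> borel_measurable M" and Af: "A f \<in> borel_measurable M"
    and homogeneous: "\<And>c g. A (\<lambda>y. c * g y) = (\<lambda>y. c * A g y)"
    and nonzero: "(\<integral>\<^sup>+y. ennreal ((f y)\<^sup>2) \<partial>M) \<noteq> 0"
    and finite: "(\<integral>\<^sup>+y. ennreal ((f y)\<^sup>2) \<partial>M) < \<infinity>"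
  shows "(\<integral>\<^sup>+y. ennreal ((A f y)\<^sup>2) \<partial>M) \<le> (opnorm M A)\<^sup>2 * (\<integral>\<^sup>+y. ennreal ((f y)\<^sup>2) \<partial>M)"
proof -
  define \<beta> where "\<beta> = (\<integral>\<^sup>+y. ennreal ((f y)\<^sup>2) \<partial>M)"
  define r where "r = sqrt (enn2real \<beta>)"
  have \<beta>_eq: "\<beta> = ennreal (r\<^sup>2)" unfolding r_def using finite by (cases \<beta>) (auto simp: \<beta>_def)
  have "r \<noteq> 0" using nonzero \<beta>_eq by (auto simp: \<beta>_def)
  then have r0: "0 < r" unfolding r_def by (simp add: less_le)
  have cancel: "ennreal (r\<^sup>2) * ennreal (1/r\<^sup>2) = 1" using r0 by (simp add: ennreal_mult[symmetric])
  define f' where "f' y = (1/r) * f y" for y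
  have "(\<integral>\<^sup>+y. ennreal ((f' y)\<^sup>2) \<partial>M) = 1"
    unfolding f'_def nn_integral_square_scale[OF f] \<beta>_def[symmetric] \<beta>_eq
    using cancel by (simp add: power_divide mult.commute)
  then have "l2norm M f' \<le> 1" by (simp add: l2norm_le_iff)
  moreover have "f' \<in> borel_measurable M" unfolding f'_def using f by simp
  ultimately have "l2norm M (A f') \<le> opnorm M A"
    unfolding opnorm_def by (intro SUP_upper) simp
  then have "ennreal (1/r\<^sup>2) * (\<integral>\<^sup>+y. ennreal ((A f y)\<^sup>2) \<partial>M) \<le> (opnorm M A)\<^sup>2"
    unfolding l2norm_le_iff f'_def homogeneous nn_integral_square_scale[OF Af]
    by (simp add: power_divide)
  then have "ennreal (r\<^sup>2) * (ennreal (1/r\<^sup>2) * (\<integral>\<^sup>+y. ennreal ((A f y)\<^sup>2) \<partial>M)) \<le> ennreal (r\<^sup>2) * (opnorm M A)\<^sup>2"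
    by (rule mult_left_mono) simp
  then show ?thesis unfolding mult.assoc[symmetric] cancel \<beta>_def[symmetric] \<beta>_eq
    by (simp add: mult.commute)
qed

lemma integral_measurable_kernel:
  fixes f :: "'a \<Rightarrow> 'b \<Rightarrow> real"
  assumes f[measurable]: "(\<lambda>(x, y). f x y) \<in> borel_measurable (M \<Otimes>\<^sub>M N)"
  assumes L[measurable]: "L \<in> measurable M (subprob_algebra N)"
  shows "(\<lambda>x. integral\<^sup>L (L x) (f x)) \<in> borel_measurable M"
proof -
  have "(\<lambda>x. distr (L x) (M \<Otimes>\<^sub>M N) (\<lambda>y. (x, y))) \<in> measurable M (subprob_algebra (M \<Otimes>\<^sub>M N))"
    by (rule measurable_distr2[where f="\<lambda>x y. (x,y)" and M=N]) (simp_all add: L)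
  from measurable_compose[OF this integral_measurable_subprob_algebra[OF f]]
  have "(\<lambda>x. integral\<^sup>L (distr (L x) (M \<Otimes>\<^sub>M N) (\<lambda>y. (x, y))) (\<lambda>(x, y). f x y)) \<in> borel_measurable M"
    by (simp add: o_def)
  then show ?thesis
  proof (rule measurable_cong[THEN iffD1, rotated])
    fix x assume x: "x \<in> space M"
    have m: "(\<lambda>y. (x, y)) \<in> measurable (L x) (M \<Otimes>\<^sub>M N)"
      unfolding measurable_cong_sets[OF sets_kernel[OF L x] refl] by (rule measurable_Pair1'[OF x])
    show "integral\<^sup>L (distr (L x) (M \<Otimes>\<^sub>M N) (\<lambda>y. (x, y))) (\<lambda>(x, y). f x y) = integral\<^sup>L (L x) (f x)"
      using integral_distr[OF m f] by (simp only: case_prod_conv)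
  qed
qed

lemma measurable_sections:
  assumes h: "(\<lambda>(t, x). h t x) \<in> borel_measurable (borel \<Otimes>\<^sub>M borel)"
  shows "h t \<in> borel_measurable borel" and "(\<lambda>t. h t x) \<in> borel_measurable borel"
proof -
  have "Pair t \<in> borel \<rightarrow>\<^sub>M borel \<Otimes>\<^sub>M borel" by (rule measurable_Pair1') simp
  from measurable_compose[OF this h] show "h t \<in> borel_measurable borel" by (simp add: o_def)
  have "(\<lambda>t. (t, x)) \<in> borel \<rightarrow>\<^sub>M borel \<Otimes>\<^sub>M borel" by (rule measurable_Pair2') simp
  from measurable_compose[OF this h] show "(\<lambda>t. h t x) \<in> borel_measurable borel" by (simp add: o_def)
qed

lemma measurable_swap:
  assumes "(\<lambda>(t, x). h t x) \<in> borel_measurable (borel \<Otimes>\<^sub>M borel)"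
  shows "(\<lambda>(x, t). h t x) \<in> borel_measurable (borel \<Otimes>\<^sub>M borel)"
  using assms by (subst measurable_pair_swap_iff) (simp add: split_beta')

lemma measurable_pair_sets_borel:
  assumes "sets M = sets borel" "sets N = sets borel" "h \<in> borel_measurable (borel \<Otimes>\<^sub>M borel)"
  shows "h \<in> borel_measurable (M \<Otimes>\<^sub>M N)"
  using assms(3) unfolding measurable_cong_sets[OF sets_pair_measure_cong[OF assms(1,2)] refl] .

lemma kpow_0: "kpow P 0 f = f"
  by (simp add: kpow_def)

lemma kpow_Suc: "kpow P (Suc n) f = kop P (kpow P n f)"
  by (simp add: kpow_def)

lemma kpow_scale: "kpow P n (\<lambda>y. c * f y) = (\<lambda>y. c * kpow P n f y)"
  by (induction n) (simp_all add: kpow_def kop_def)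

lemma lvl_antimono: "s \<le> t \<Longrightarrow> lvl K \<rho> t \<subseteq> lvl K \<rho> s"
  unfolding lvl_def by auto

lemma sets_unif[simp]: "sets (unif K \<rho> t) = sets borel"
  unfolding unif_def by simp

lemma space_unif[simp]: "space (unif K \<rho> t) = UNIV"
  unfolding unif_def by simp

lemma measurable_unif[simp]: "measurable (unif K \<rho> t) M = measurable borel M"
  by (rule measurable_cong_sets) simp_all

section \<open>The slice-sampler setting\<close>

locale slice_setting =
  fixes K :: "'a::euclidean_space set" and \<rho> :: "'a \<Rightarrow> real"
    and H :: "real \<Rightarrow> 'a \<Rightarrow> 'a measure"
  assumes K_borel[measurable]: "K \<in> sets borel"
    and \<rho>_meas[measurable]: "\<rho> \<in> borel_measurable borel"
    and \<rho>_nonneg: "\<forall>x\<in>K. 0 \<le> \<rho> x"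
    and Z_pos: "0 < (\<integral>\<^sup>+x. ennreal (indicator K x * \<rho> x) \<partial>lborel)"
    and Z_fin: "(\<integral>\<^sup>+x. ennreal (indicator K x * \<rho> x) \<partial>lborel) < \<infinity>"
    and vol_lvl: "\<forall>t. 0 < t \<and> ereal t < esssup lborel (\<lambda>x. ereal (indicator K x * \<rho> x)) \<longrightarrow>
        0 < emeasure lborel (lvl K \<rho> t) \<and> emeasure lborel (lvl K \<rho> t) < \<infinity>"
    and H_meas: "(\<lambda>(t, x). H t x) \<in> borel \<Otimes>\<^sub>M borel \<rightarrow>\<^sub>M subprob_algebra borel"
    and H_rev: "\<forall>t\<ge>0. \<forall>A\<in>sets borel. \<forall>B\<in>sets borel.
        (\<integral>\<^sup>+x. emeasure (H t x) B * indicator A x \<partial>unif K \<rho> t)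
      = (\<integral>\<^sup>+x. emeasure (H t x) A * indicator B x \<partial>unif K \<rho> t)"
begin

lemma lvl_pred[measurable]: "Measurable.pred (borel \<Otimes>\<^sub>M borel) (\<lambda>(t,x). x \<in> lvl K \<rho> t)"
  unfolding lvl_def by measurable

lemma lvl_sets[measurable]: "lvl K \<rho> t \<in> sets borel"
  unfolding lvl_def by measurable

lemma lvl_nonpos: "t \<le> 0 \<Longrightarrow> lvl K \<rho> t = K"
  unfolding lvl_def using \<rho>_nonneg by force

abbreviation esssup_\<rho> :: ereal where
  "esssup_\<rho> \<equiv> esssup lborel (\<lambda>x. ereal (indicator K x * \<rho> x))"

lemma esssup_pos: "0 < esssup_\<rho>"
proof (rule ccontr)
  assume "\<not> 0 < esssup_\<rho>"
  then have "ereal (indicator K x * \<rho> x) \<le> esssup_\<rho> \<Longrightarrow> indicator K x * \<rho> x \<le> 0" for x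
    by (metis order_trans not_less zero_ereal_def ereal_less_eq(3))
  then have "AE x in lborel. ennreal (indicator K x * \<rho> x) = 0"
    using esssup_AE[of "\<lambda>x. ereal (indicator K x * \<rho> x)" lborel]
    by (elim AE_mp) (intro AE_I2, auto simp: ennreal_eq_0_iff)
  then have "(\<integral>\<^sup>+x. ennreal (indicator K x * \<rho> x) \<partial>lborel) = 0"
    by (simp add: nn_integral_cong_AE)
  with Z_pos show False by simp
qed

text \<open>Every level set K(t), t > 0, has finite volume: below the essential supremum this
  is assumed, above it K(t) is contained in a level set below it.\<close>
lemma lvl_finite_volume: "0 < t \<Longrightarrow> emeasure lborel (lvl K \<rho> t) < \<infinity>"
proof (cases "ereal t < esssup_\<rho>")
  case False
  assume t: "0 < t"
  then obtain s where s: "esssup_\<rho> = ereal s" "0 < s" "s \<le> t"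
    using esssup_pos False by (cases esssup_\<rho>) auto
  then have "emeasure lborel (lvl K \<rho> (s/2)) < \<infinity>" using vol_lvl by simp
  moreover have "emeasure lborel (lvl K \<rho> t) \<le> emeasure lborel (lvl K \<rho> (s/2))"
    using s by (intro emeasure_mono lvl_antimono) simp_all
  ultimately show ?thesis by (meson le_less_trans)
qed (use vol_lvl in blast)

text \<open>For almost every x \<in> K with \<rho>(x) > 0 the top level set K(\<rho>(x)) has positive volume.
  This is what makes the uniform distributions U_t, 0 < t \<le> \<rho>(x), probability measures.\<close>
lemma ae_top_level_nonnull: "AE x in lborel. x \<in> K \<and> 0 < \<rho> x \<longrightarrow> emeasure lborel (lvl K \<rho> (\<rho> x)) \<noteq> 0"
proof -
  have below: "AE x in lborel. ereal (indicator K x * \<rho> x) \<le> esssup_\<rho>" by (rule esssup_AE)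
  have at_sup: "AE x in lborel. x \<in> K \<and> ereal (\<rho> x) = esssup_\<rho> \<longrightarrow> emeasure lborel (lvl K \<rho> (\<rho> x)) \<noteq> 0"
  proof (cases "\<exists>s. esssup_\<rho> = ereal s \<and> emeasure lborel (lvl K \<rho> s) = 0")
    case True
    then obtain s where s: "esssup_\<rho> = ereal s" "emeasure lborel (lvl K \<rho> s) = 0" by auto
    then have "AE x in lborel. x \<notin> lvl K \<rho> s" by (intro AE_not_in) (simp add: null_sets_def)
    then show ?thesis by (rule AE_mp) (intro AE_I2, auto simp: s lvl_def)
  qed (intro AE_I2, auto)
  show ?thesis using below at_sup
  proof eventually_elim
    case (elim x)
    then show ?case using vol_lvl by (cases "ereal (\<rho> x) < esssup_\<rho>") auto
  qed
qed

lemma prob_space_unif: "0 < t \<Longrightarrow> emeasure lborel (lvl K \<rho> t) \<noteq> 0 \<Longrightarrow> prob_space (unif K \<rho> t)"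
  unfolding unif_def using lvl_finite_volume[of t] by (intro prob_space_uniform_measure) auto

lemma nn_integral_unif:
  assumes "g \<in> borel_measurable borel"
  shows "(\<integral>\<^sup>+x. g x \<partial>unif K \<rho> t) = (\<integral>\<^sup>+x. g x * indicator (lvl K \<rho> t) x \<partial>lborel) / emeasure lborel (lvl K \<rho> t)"
  unfolding unif_def using assms by (intro nn_integral_uniform_measure) simp_all

lemma integral_unif:
  fixes f :: "'a \<Rightarrow> real"
  assumes t: "0 < t" and f: "f \<in> borel_measurable borel"
  shows "integral\<^sup>L (unif K \<rho> t) f = (\<integral>x. indicator (lvl K \<rho> t) x * f x \<partial>lborel) / measure lborel (lvl K \<rho> t)"
proof (cases "emeasure lborel (lvl K \<rho> t) = 0")
  case True
  then have "emeasure (unif K \<rho> t) (space (unif K \<rho> t)) = 0"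
    unfolding unif_def by simp
  then have "AE x in unif K \<rho> t. f x = 0"
    by (intro AE_I'[of "space (unif K \<rho> t)"]) (auto simp: null_sets_def)
  then have "integral\<^sup>L (unif K \<rho> t) f = 0" by (rule integral_eq_zero_AE)
  moreover have "measure lborel (lvl K \<rho> t) = 0" using True by (simp add: measure_def)
  ultimately show ?thesis by simp
next
  case False
  define m where "m = measure lborel (lvl K \<rho> t)"
  have em: "emeasure lborel (lvl K \<rho> t) = ennreal m"
    unfolding m_def using lvl_finite_volume[OF t] by (simp add: emeasure_eq_ennreal_measure less_top)
  with False have m0: "0 < m" by (simp add: m_def order_less_le)
  have "unif K \<rho> t = density lborel (\<lambda>x. ennreal (indicator (lvl K \<rho> t) x / m))"
    unfolding unif_def uniform_measure_def em
    by (intro arg_cong[where f="density lborel"] ext) (simp add: divide_ennreal m0 ennreal_indicator[symmetric])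
  then have "integral\<^sup>L (unif K \<rho> t) f = (\<integral>x. (indicator (lvl K \<rho> t) x / m) * f x \<partial>lborel)"
    by (simp, subst integral_density) (use f m0 in auto)
  then show ?thesis unfolding m_def[symmetric] by (simp add: mult.commute)
qed

text \<open>The map t \<mapsto> U_t(f) is Borel measurable (for t \<le> 0 all U_t coincide with U_0).\<close>
lemma unif_integral_measurable:
  fixes f :: "'a \<Rightarrow> real"
  assumes f: "f \<in> borel_measurable borel"
  shows "(\<lambda>t. integral\<^sup>L (unif K \<rho> t) f) \<in> borel_measurable borel"
proof -
  have joint: "(\<lambda>(t, x). indicator (lvl K \<rho> t) x * f x) \<in> borel_measurable (borel \<Otimes>\<^sub>M lborel)"
    by (rule measurable_pair_sets_borel) (use f in simp_all)
  have "{p \<in> space (borel \<Otimes>\<^sub>M borel). case p of (t, x) \<Rightarrow> x \<in> lvl K \<rho> t} \<in> sets (borel \<Otimes>\<^sub>M borel)"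
    using lvl_pred unfolding pred_def .
  then have "{p \<in> space (borel \<Otimes>\<^sub>M lborel). snd p \<in> lvl K \<rho> (fst p)} \<in> sets (borel \<Otimes>\<^sub>M lborel)"
    unfolding sets_pair_measure_cong[OF refl sets_lborel] space_pair_measure by (simp add: split_beta')
  then have vol: "(\<lambda>t. measure lborel (lvl K \<rho> t)) \<in> borel_measurable borel"
    by (rule lborel.measurable_measure[rotated]) simp
  have "(\<lambda>t. if 0 < t then (\<integral>x. indicator (lvl K \<rho> t) x * f x \<partial>lborel) / measure lborel (lvl K \<rho> t)
        else integral\<^sup>L (unif K \<rho> 0) f) \<in> borel_measurable borel"
  proof (rule measurable_If[OF borel_measurable_divide[OF _ vol] measurable_const])
    show "(\<lambda>t. \<integral>x. indicator (lvl K \<rho> t) x * f x \<partial>lborel) \<in> borel_measurable borel"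
      using lborel.borel_measurable_lebesgue_integral[OF joint] by simp
    have "{t \<in> space borel. 0 < (t::real)} = {0<..}" by auto
    then show "{t \<in> space borel. 0 < (t::real)} \<in> sets borel" by simp
  qed (simp only: space_borel UNIV_I)
  also have "(\<lambda>t. if 0 < t then (\<integral>x. indicator (lvl K \<rho> t) x * f x \<partial>lborel) / measure lborel (lvl K \<rho> t)
        else integral\<^sup>L (unif K \<rho> 0) f) = (\<lambda>t. integral\<^sup>L (unif K \<rho> t) f)"
  proof
    fix t :: real
    have "unif K \<rho> t = unif K \<rho> 0" if "t \<le> 0"
      unfolding unif_def using lvl_nonpos[OF that] lvl_nonpos[of 0] by simp
    then show "(if 0 < t then (\<integral>x. indicator (lvl K \<rho> t) x * f x \<partial>lborel) / measure lborel (lvl K \<rho> t)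
        else integral\<^sup>L (unif K \<rho> 0) f) = integral\<^sup>L (unif K \<rho> t) f"
      using integral_unif[OF _ f, of t] by (cases "0 < t") auto
  qed
  finally show ?thesis .
qed

lemma H_kernel: "H t \<in> borel \<rightarrow>\<^sub>M subprob_algebra borel"
  using H_meas by measurable

lemma sets_H: "sets (H t x) = sets borel"
  using sets_kernel[OF H_kernel[of t], of x] by simp

lemma kpow_measurable_joint:
  assumes f: "f \<in> borel_measurable borel"
  shows "(\<lambda>(t,x). kpow (H t) n f x) \<in> borel_measurable (borel \<Otimes>\<^sub>M borel)"
proof (induction n)
  case 0
  show ?case using f unfolding kpow_0 by measurable
next
  case (Suc n)
  have "(\<lambda>p. integral\<^sup>L (H (fst p) (snd p)) (\<lambda>y. kpow (H (fst p)) n f y)) \<in> borel_measurable (borel \<Otimes>\<^sub>M borel)"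
  proof (rule integral_measurable_kernel[where N=borel])
    show "(\<lambda>(p, y). kpow (H (fst p)) n f y) \<in> borel_measurable ((borel \<Otimes>\<^sub>M borel) \<Otimes>\<^sub>M borel)"
      using measurable_compose[OF measurable_Pair[OF measurable_compose[OF measurable_fst measurable_fst]
          measurable_snd] Suc]
      by (simp add: split_beta' o_def)
    show "(\<lambda>p. H (fst p) (snd p)) \<in> borel \<Otimes>\<^sub>M borel \<rightarrow>\<^sub>M subprob_algebra borel"
      using H_meas by (simp only: split_beta')
  qed
  then show ?case unfolding kpow_Suc kop_def by (simp only: split_beta')
qed

lemma kpow_measurable:
  "f \<in> borel_measurable borel \<Longrightarrow> kpow (H t) n f \<in> borel_measurable borel"
  using measurable_sections(1)[OF kpow_measurable_joint] .

text \<open>Reversibility with A = {h \<noteq> 0}, B = UNIV shows that H_t(x, {h \<noteq> 0}) = 0 for U_t-almost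
  every x when h = 0 U_t-a.e.; hence H_t, and all its powers, preserve U_t-null functions.\<close>
lemma kop_null_preserving:
  assumes t: "0 \<le> t" and h: "h \<in> borel_measurable borel" and ae: "AE x in unif K \<rho> t. h x = 0"
  shows "AE x in unif K \<rho> t. kop (H t) h x = 0"
proof -
  define N where "N = {x. h x \<noteq> 0}"
  have N: "N \<in> sets borel" unfolding N_def using h by measurable
  have Hm: "(\<lambda>x. emeasure (H t x) A) \<in> borel_measurable borel" if "A \<in> sets borel" for A
    using measurable_compose[OF H_kernel measurable_emeasure_subprob_algebra[OF that]] by (simp add: o_def)
  have "(\<integral>\<^sup>+x. emeasure (H t x) UNIV * indicator N x \<partial>unif K \<rho> t) = 0"
  proof (rule nn_integral_0_iff_AE[THEN iffD2])
    show "(\<lambda>x. emeasure (H t x) UNIV * indicator N x) \<in> borel_measurable (unif K \<rho> t)"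
      using Hm[of UNIV] N by simp
    show "AE x in unif K \<rho> t. emeasure (H t x) UNIV * indicator N x = 0"
      using ae by (rule AE_mp) (intro AE_I2, simp add: N_def)
  qed
  moreover have "(\<integral>\<^sup>+x. emeasure (H t x) UNIV * indicator N x \<partial>unif K \<rho> t)
      = (\<integral>\<^sup>+x. emeasure (H t x) N * indicator UNIV x \<partial>unif K \<rho> t)"
    using H_rev t N by simp
  ultimately have "(\<integral>\<^sup>+x. emeasure (H t x) N \<partial>unif K \<rho> t) = 0" by simp
  then have "AE x in unif K \<rho> t. emeasure (H t x) N = 0"
    using nn_integral_0_iff_AE[of "\<lambda>x. emeasure (H t x) N"] Hm[OF N] by simp
  then show ?thesis
  proof (rule AE_mp, intro AE_I2 impI)
    fix x assume "emeasure (H t x) N = 0"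
    then have "AE y in H t x. h y = 0"
      by (intro AE_I'[of N]) (use N in \<open>auto simp: null_sets_def sets_H N_def\<close>)
    then show "kop (H t) h x = 0" unfolding kop_def by (rule integral_eq_zero_AE)
  qed
qed

lemma kpow_null_preserving:
  assumes t: "0 \<le> t" and f: "f \<in> borel_measurable borel" and ae: "AE x in unif K \<rho> t. f x = 0"
  shows "AE x in unif K \<rho> t. kpow (H t) n f x = 0"
proof (induction n)
  case (Suc n)
  show ?case unfolding kpow_Suc by (rule kop_null_preserving[OF t kpow_measurable[OF f] Suc])
qed (use ae in \<open>simp add: kpow_0\<close>)

definition level_op :: "real \<Rightarrow> nat \<Rightarrow> ('a \<Rightarrow> real) \<Rightarrow> ('a \<Rightarrow> real)" where
  "level_op t k = (\<lambda>f y. kpow (H t) k f y - integral\<^sup>L (unif K \<rho> t) f)"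

lemma level_op_measurable:
  "f \<in> borel_measurable borel \<Longrightarrow> level_op t k f \<in> borel_measurable borel"
  unfolding level_op_def using kpow_measurable[of f t k] by simp

text \<open>The second statement needs the null-preservation of H_t, since the operator norm
  of a possibly unbounded operator gives no information about f = 0 a.e.\<close>
lemma unif_level_bound:
  fixes f :: "'a \<Rightarrow> real"
  assumes t: "0 \<le> t" and f: "f \<in> borel_measurable borel"
    and finite: "(\<integral>\<^sup>+y. ennreal ((f y)\<^sup>2) \<partial>unif K \<rho> t) < \<infinity>"
  shows "(\<integral>\<^sup>+y. ennreal ((level_op t k f y)\<^sup>2) \<partial>unif K \<rho> t)
      \<le> (opnorm (unif K \<rho> t) (level_op t k))\<^sup>2 * (\<integral>\<^sup>+y. ennreal ((f y)\<^sup>2) \<partial>unif K \<rho> t)"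
    and "(\<integral>\<^sup>+y. ennreal ((f y)\<^sup>2) \<partial>unif K \<rho> t) = 0 \<Longrightarrow> (\<integral>\<^sup>+y. ennreal ((level_op t k f y)\<^sup>2) \<partial>unif K \<rho> t) = 0"
proof -
  have fU: "f \<in> borel_measurable (unif K \<rho> t)" using f by simp
  have vanish: "(\<integral>\<^sup>+y. ennreal ((level_op t k f y)\<^sup>2) \<partial>unif K \<rho> t) = 0"
    if zero: "(\<integral>\<^sup>+y. ennreal ((f y)\<^sup>2) \<partial>unif K \<rho> t) = 0"
  proof -
    have f0: "AE y in unif K \<rho> t. f y = 0"
      using zero fU by (subst (asm) nn_integral_0_iff_AE) (auto elim: AE_mp)
    then have "AE y in unif K \<rho> t. kpow (H t) k f y = 0"
      by (rule kpow_null_preserving[OF t f])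
    moreover have "integral\<^sup>L (unif K \<rho> t) f = 0" using f0 by (rule integral_eq_zero_AE)
    ultimately have "AE y in unif K \<rho> t. level_op t k f y = 0"
      by (elim AE_mp) (simp add: level_op_def)
    then have "AE y in unif K \<rho> t. ennreal ((level_op t k f y)\<^sup>2) = 0"
      by (elim AE_mp) simp
    from nn_integral_cong_AE[OF this] show ?thesis by simp
  qed
  then show "(\<integral>\<^sup>+y. ennreal ((f y)\<^sup>2) \<partial>unif K \<rho> t) = 0 \<Longrightarrow> (\<integral>\<^sup>+y. ennreal ((level_op t k f y)\<^sup>2) \<partial>unif K \<rho> t) = 0" .
  show "(\<integral>\<^sup>+y. ennreal ((level_op t k f y)\<^sup>2) \<partial>unif K \<rho> t)
      \<le> (opnorm (unif K \<rho> t) (level_op t k))\<^sup>2 * (\<integral>\<^sup>+y. ennreal ((f y)\<^sup>2) \<partial>unif K \<rho> t)"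
  proof (cases "(\<integral>\<^sup>+y. ennreal ((f y)\<^sup>2) \<partial>unif K \<rho> t) = 0")
    case False
    show ?thesis
    proof (rule opnorm_bound[OF fU _ _ False finite])
      show "level_op t k f \<in> borel_measurable (unif K \<rho> t)" using level_op_measurable[OF f] by simp
      show "level_op t k (\<lambda>y. c * g y) = (\<lambda>y. c * level_op t k g y)" for c g
        unfolding level_op_def kpow_scale by (simp add: right_diff_distrib)
    qed
  qed (use vanish in simp)
qed

subsection \<open>Exchanging the order of integration\<close>

lemma slice_tonelli:
  fixes h :: "real \<Rightarrow> 'a \<Rightarrow> ennreal"
  assumes h: "(\<lambda>(t, x). h t x) \<in> borel_measurable (borel \<Otimes>\<^sub>M borel)"
  shows "(\<integral>\<^sup>+x. indicator K x * (\<integral>\<^sup>+t. indicator {0..\<rho> x} t * h t x \<partial>lborel) \<partial>lborel)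
       = (\<integral>\<^sup>+t. indicator {0..} t * (\<integral>\<^sup>+x. indicator (lvl K \<rho> t) x * h t x \<partial>lborel) \<partial>lborel)"
proof -
  define F where "F t x = indicator {0..} t * (indicator (lvl K \<rho> t) x * h t x)" for t x
  have "(\<lambda>(t, x). F t x) \<in> borel_measurable (lborel \<Otimes>\<^sub>M lborel)"
    by (rule measurable_pair_sets_borel) (use h in \<open>simp_all add: F_def\<close>)
  then have fubini: "(\<integral>\<^sup>+x. (\<integral>\<^sup>+t. F t x \<partial>lborel) \<partial>lborel) = (\<integral>\<^sup>+t. (\<integral>\<^sup>+x. F t x \<partial>lborel) \<partial>lborel)"
    by (rule lborel_pair.Fubini')
  have region: "indicator K x * (indicator {0..\<rho> x} t * h t x) = F t x" for t x
    unfolding F_def by (auto simp: lvl_def split: split_indicator)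
  have "(\<integral>\<^sup>+x. indicator K x * (\<integral>\<^sup>+t. indicator {0..\<rho> x} t * h t x \<partial>lborel) \<partial>lborel)
      = (\<integral>\<^sup>+x. (\<integral>\<^sup>+t. F t x \<partial>lborel) \<partial>lborel)"
    using measurable_sections(2)[OF h] by (simp add: nn_integral_cmult[symmetric] region)
  also have "\<dots> = (\<integral>\<^sup>+t. (\<integral>\<^sup>+x. F t x \<partial>lborel) \<partial>lborel)" by (rule fubini)
  also have "\<dots> = (\<integral>\<^sup>+t. indicator {0..} t * (\<integral>\<^sup>+x. indicator (lvl K \<rho> t) x * h t x \<partial>lborel) \<partial>lborel)"
    using measurable_sections(1)[OF h] unfolding F_def by (simp add: nn_integral_cmult)
  finally show ?thesis .
qed

lemma nn_integral_slice_const: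
  "x \<in> K \<Longrightarrow> (\<integral>\<^sup>+t. indicator {0..\<rho> x} t * y \<partial>lborel) = y * ennreal (\<rho> x)"
  using \<rho>_nonneg by (subst nn_integral_multc) (auto simp: mult.commute)

lemma normconst_pos: "0 < normconst K \<rho>"
  unfolding normconst_def using Z_fin Z_pos by (simp add: enn2real_positive_iff)

lemma nn_integral_target:
  assumes "g \<in> borel_measurable borel"
  shows "(\<integral>\<^sup>+x. g x \<partial>target K \<rho>) = (\<integral>\<^sup>+x. ennreal (indicator K x * \<rho> x / normconst K \<rho>) * g x \<partial>lborel)"
  unfolding target_def using assms by (intro nn_integral_density) simp_all

lemma nn_integral_density_\<rho>:
  assumes g: "g \<in> borel_measurable borel"
  shows "(\<integral>\<^sup>+x. indicator K x * (ennreal (\<rho> x) * g x) \<partial>lborel) = ennreal (normconst K \<rho>) * (\<integral>\<^sup>+x. g x \<partial>target K \<rho>)"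
proof -
  have weight: "indicator K x * (ennreal (\<rho> x) * g x)
      = ennreal (normconst K \<rho>) * (ennreal (indicator K x * \<rho> x / normconst K \<rho>) * g x)" for x
  proof (cases "x \<in> K")
    case True
    then have "ennreal (normconst K \<rho>) * ennreal (\<rho> x / normconst K \<rho>) = ennreal (\<rho> x)"
      using normconst_pos \<rho>_nonneg by (simp add: ennreal_mult[symmetric])
    then show ?thesis using True by (simp add: mult.assoc[symmetric])
  qed simp
  show ?thesis unfolding weight nn_integral_target[OF g] using g by (simp add: nn_integral_cmult)
qed


context
  fixes f :: "'a \<Rightarrow> real" and k :: nat
  assumes f[measurable]: "f \<in> borel_measurable borel"
begin

text \<open>The ratio is measurable in t and bounded by \<parallel>H_t^k - U_t\<parallel>^2, which
  itself need not be measurable.\<close>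
definition level_error :: "real \<Rightarrow> ennreal" where
  "level_error t = (\<integral>\<^sup>+x. indicator (lvl K \<rho> t) x * ennreal ((level_op t k f x)\<^sup>2) \<partial>lborel)"

definition level_mass :: "real \<Rightarrow> ennreal" where
  "level_mass t = (\<integral>\<^sup>+x. indicator (lvl K \<rho> t) x * ennreal ((f x)\<^sup>2) \<partial>lborel)"

definition level_ratio :: "real \<Rightarrow> ennreal" where
  "level_ratio t = level_error t / level_mass t"

lemma level_error_bound:
  assumes t: "0 < t" and finite: "level_mass t < \<infinity>"
  shows "level_error t \<le> (opnorm (unif K \<rho> t) (level_op t k))\<^sup>2 * level_mass t"
    and "level_mass t = 0 \<Longrightarrow> level_error t = 0"
proof -
  define V where "V = emeasure lborel (lvl K \<rho> t)"
  have "level_error t \<le> (opnorm (unif K \<rho> t) (level_op t k))\<^sup>2 * level_mass t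
      \<and> (level_mass t = 0 \<longrightarrow> level_error t = 0)"
  proof (cases "V = 0")
    case True
    then have "AE x in lborel. x \<notin> lvl K \<rho> t" by (intro AE_not_in) (simp add: null_sets_def V_def)
    then have "AE x in lborel. indicator (lvl K \<rho> t) x * ennreal ((level_op t k f x)\<^sup>2) = 0"
      by (rule AE_mp) (intro AE_I2, simp)
    from nn_integral_cong_AE[OF this] have "level_error t = 0" by (simp add: level_error_def)
    then show ?thesis by simp
  next
    case False
    have V_fin: "V < \<infinity>" unfolding V_def by (rule lvl_finite_volume[OF t])
    have scale: "(\<integral>\<^sup>+x. indicator (lvl K \<rho> t) x * ennreal ((g x)\<^sup>2) \<partial>lborel)
        = V * (\<integral>\<^sup>+x. ennreal ((g x)\<^sup>2) \<partial>unif K \<rho> t)" if "g \<in> borel_measurable borel" for g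
    proof -
      have "(\<integral>\<^sup>+x. ennreal ((g x)\<^sup>2) \<partial>unif K \<rho> t)
          = (\<integral>\<^sup>+x. indicator (lvl K \<rho> t) x * ennreal ((g x)\<^sup>2) \<partial>lborel) / V"
        using that by (simp add: nn_integral_unif V_def mult.commute)
      then show ?thesis using False V_fin
        by (simp add: mult.commute[of V] ennreal_divide_times less_top)
    qed
    have mass: "level_mass t = V * (\<integral>\<^sup>+x. ennreal ((f x)\<^sup>2) \<partial>unif K \<rho> t)"
      unfolding level_mass_def by (rule scale) simp
    have error: "level_error t = V * (\<integral>\<^sup>+x. ennreal ((level_op t k f x)\<^sup>2) \<partial>unif K \<rho> t)"
      unfolding level_error_def by (rule scale[OF level_op_measurable[OF f]])
    have "(\<integral>\<^sup>+x. ennreal ((f x)\<^sup>2) \<partial>unif K \<rho> t) < \<infinity>"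
      using finite False unfolding mass by (auto simp: ennreal_mult_less_top)
    note bounds = unif_level_bound[OF less_imp_le[OF t] f this, of k]
    show ?thesis
      using mult_left_mono[OF bounds(1), of V] bounds(2) False
      unfolding mass error by (simp add: ac_simps)
  qed
  then show "level_error t \<le> (opnorm (unif K \<rho> t) (level_op t k))\<^sup>2 * level_mass t"
    and "level_mass t = 0 \<Longrightarrow> level_error t = 0" by auto
qed

lemma level_ratio_bound:
  assumes t: "0 < t" and finite: "level_mass t < \<infinity>"
  shows "level_ratio t \<le> (opnorm (unif K \<rho> t) (level_op t k))\<^sup>2"
    and "level_error t \<le> level_ratio t * level_mass t"
proof -
  note bounds = level_error_bound[OF t finite]
  have "level_ratio t \<le> (opnorm (unif K \<rho> t) (level_op t k))\<^sup>2 \<and> level_error t \<le> level_ratio t * level_mass t"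
  proof (cases "level_mass t = 0")
    case False
    have "level_ratio t * level_mass t = level_error t"
      using False finite unfolding level_ratio_def by (simp add: ennreal_divide_times)
    moreover have "level_ratio t \<le> (opnorm (unif K \<rho> t) (level_op t k))\<^sup>2"
      unfolding level_ratio_def using False bounds(1)
      by (intro divide_le_posI_ennreal) (simp_all add: zero_less_iff_neq_zero mult.commute)
    ultimately show ?thesis by simp
  qed (use bounds(2) in \<open>simp add: level_ratio_def\<close>)
  then show "level_ratio t \<le> (opnorm (unif K \<rho> t) (level_op t k))\<^sup>2"
    and "level_error t \<le> level_ratio t * level_mass t" by auto
qed

definition slice_error :: "'a \<Rightarrow> ennreal" where
  "slice_error x = (\<integral>\<^sup>+t. indicator {0..\<rho> x} t * ennreal ((level_op t k f x)\<^sup>2) \<partial>lborel)"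

lemma level_op_joint_measurable[measurable]:
  "(\<lambda>(t, x). level_op t k f x) \<in> borel_measurable (borel \<Otimes>\<^sub>M borel)"
proof -
  have "(\<lambda>(t::real, x::'a). integral\<^sup>L (unif K \<rho> t) f) \<in> borel_measurable (borel \<Otimes>\<^sub>M borel)"
    using measurable_compose[OF measurable_fst unif_integral_measurable[OF f]] by (simp add: o_def split_beta')
  then show ?thesis unfolding level_op_def using kpow_measurable_joint[OF f, of k] by measurable
qed

lemma level_error_measurable[measurable]: "level_error \<in> borel_measurable borel"
proof -
  have "(\<lambda>(t, x). indicator (lvl K \<rho> t) x * ennreal ((level_op t k f x)\<^sup>2)) \<in> borel_measurable (borel \<Otimes>\<^sub>M lborel)"
    by (rule measurable_pair_sets_borel) simp_all
  from lborel.borel_measurable_nn_integral[OF this] show ?thesis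
    unfolding level_error_def[abs_def] by simp
qed

lemma level_mass_measurable[measurable]: "level_mass \<in> borel_measurable borel"
proof -
  have "(\<lambda>(t, x). indicator (lvl K \<rho> t) x * ennreal ((f x)\<^sup>2)) \<in> borel_measurable (borel \<Otimes>\<^sub>M lborel)"
    by (rule measurable_pair_sets_borel) simp_all
  from lborel.borel_measurable_nn_integral[OF this] show ?thesis
    unfolding level_mass_def[abs_def] by simp
qed

lemma level_ratio_measurable[measurable]: "level_ratio \<in> borel_measurable borel"
  unfolding level_ratio_def[abs_def] by measurable

lemma slice_region_pred: "Measurable.pred (borel \<Otimes>\<^sub>M borel) (\<lambda>p. snd p \<in> {0..\<rho> (fst p)})"
  unfolding atLeastAtMost_iff by measurable

lemma slice_difference_measurable:
  "(\<lambda>x. hybk K \<rho> H k f x - simple_slice K \<rho> f x) \<in> borel_measurable borel"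
proof -
  have slice_integral: "(\<lambda>x. set_lebesgue_integral lborel {0..\<rho> x} (\<lambda>t. g t x)) \<in> borel_measurable borel"
    if g: "(\<lambda>(t, x). g t x) \<in> borel_measurable (borel \<Otimes>\<^sub>M borel)" for g :: "real \<Rightarrow> 'a \<Rightarrow> real"
  proof -
    have "(\<lambda>(x, t). indicator {0..\<rho> x} t *\<^sub>R g t x) \<in> borel_measurable (borel \<Otimes>\<^sub>M borel)"
      using measurable_swap[OF g, unfolded split_beta'] slice_region_pred by measurable
    then have "(\<lambda>(x, t). indicator {0..\<rho> x} t *\<^sub>R g t x) \<in> borel_measurable (borel \<Otimes>\<^sub>M lborel)"
      by (rule measurable_pair_sets_borel[rotated 2]) simp_all
    from lborel.borel_measurable_lebesgue_integral[OF this] show ?thesis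
      unfolding set_lebesgue_integral_def by simp
  qed
  have "(\<lambda>(t::real, x::'a). integral\<^sup>L (unif K \<rho> t) f) \<in> borel_measurable (borel \<Otimes>\<^sub>M borel)"
    using measurable_compose[OF measurable_fst unif_integral_measurable[OF f]] by (simp add: o_def split_beta')
  from slice_integral[OF kpow_measurable_joint[OF f]] slice_integral[OF this]
  show ?thesis unfolding hybk_def simple_slice_def by measurable
qed

text \<open>If f \<in> L_2(\<pi>) then t \<mapsto> U_t(f) is square integrable on [0, s] whenever K(s) has positive
  volume: by Jensen U_t(f)^2 \<le> \<integral>_K(t) f^2 / vol K(t) \<le> \<integral>_K(t) f^2 / vol K(s) for 0 < t \<le> s.\<close>
lemma unif_mean_square_integrable:
  assumes s: "0 < s" and top: "emeasure lborel (lvl K \<rho> s) \<noteq> 0"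
    and mass: "(\<integral>\<^sup>+t. indicator {0..} t * level_mass t \<partial>lborel) < \<infinity>"
  shows "(\<integral>\<^sup>+t. indicator {0..s} t * ennreal ((integral\<^sup>L (unif K \<rho> t) f)\<^sup>2) \<partial>lborel) < \<infinity>"
proof -
  define v where "v = emeasure lborel (lvl K \<rho> s)"
  have v0: "0 < v" using top unfolding v_def by (simp add: zero_less_iff_neq_zero)
  have "(\<integral>\<^sup>+t. indicator {0..s} t * ennreal ((integral\<^sup>L (unif K \<rho> t) f)\<^sup>2) \<partial>lborel)
      \<le> (\<integral>\<^sup>+t. indicator {0..} t * level_mass t / v \<partial>lborel)"
  proof (rule nn_integral_mono_AE)
    show "AE t in lborel. indicator {0..s} t * ennreal ((integral\<^sup>L (unif K \<rho> t) f)\<^sup>2) \<le> indicator {0..} t * level_mass t / v"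
      using AE_lborel_singleton[of 0]
    proof (rule AE_mp, intro AE_I2 impI)
      fix t :: real assume t0: "t \<noteq> 0"
      show "indicator {0..s} t * ennreal ((integral\<^sup>L (unif K \<rho> t) f)\<^sup>2) \<le> indicator {0..} t * level_mass t / v"
      proof (cases "t \<in> {0..s}")
        case True
        then have t: "0 < t" "t \<le> s" using t0 by auto
        have vt: "v \<le> emeasure lborel (lvl K \<rho> t)" unfolding v_def
          by (intro emeasure_mono lvl_antimono[OF t(2)]) simp
        then have "prob_space (unif K \<rho> t)" using v0 by (intro prob_space_unif[OF t(1)]) auto
        then have "ennreal ((integral\<^sup>L (unif K \<rho> t) f)\<^sup>2) \<le> (\<integral>\<^sup>+y. ennreal ((f y)\<^sup>2) \<partial>unif K \<rho> t)"
          by (rule jensen_square) simp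
        also have "\<dots> = level_mass t / emeasure lborel (lvl K \<rho> t)"
          by (simp add: nn_integral_unif level_mass_def mult.commute)
        also have "\<dots> \<le> level_mass t / v" by (rule ennreal_divide_antimono[OF v0 vt])
        finally show ?thesis using True t by simp
      qed simp
    qed
  qed
  also have "\<dots> = (\<integral>\<^sup>+t. indicator {0..} t * level_mass t \<partial>lborel) / v"
    by (rule nn_integral_divide) simp
  also have "\<dots> < \<infinity>" using mass v0
    by (auto simp: ennreal_divide_eq_top_iff less_top[symmetric])
  finally show ?thesis .
qed

text \<open>\<rho>(x) (H^(k) f - U f)(x) = \<integral>_0^\<rho>(x) (H_t^k f(x) - U_t(f)) dt, so by Cauchy-Schwarz
  \<rho>(x) (H^(k) f - U f)(x)^2 \<le> \<integral>_0^\<rho>(x) (H_t^k f(x) - U_t(f))^2 dt.  Splitting the integral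
  defining H^(k) f(x) requires both parts to be integrable on the slice.\<close>
lemma slice_cauchy_schwarz:
  assumes x0: "0 < \<rho> x" and top: "emeasure lborel (lvl K \<rho> (\<rho> x)) \<noteq> 0"
    and mass: "(\<integral>\<^sup>+t. indicator {0..} t * level_mass t \<partial>lborel) < \<infinity>"
  shows "ennreal (\<rho> x * (hybk K \<rho> H k f x - simple_slice K \<rho> f x)\<^sup>2) \<le> slice_error x"
proof (cases "slice_error x < \<infinity>")
  case True
  define s where "s = \<rho> x"
  define G where "G t = level_op t k f x" for t
  define u where "u t = integral\<^sup>L (unif K \<rho> t) f" for t
  have s0: "0 < s" using x0 s_def by simp
  have interval: "{0..s} \<in> sets lborel" "emeasure lborel {0..s} < \<infinity>" using s0 by simp_all
  have G_meas: "G \<in> borel_measurable lborel"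
    using measurable_sections(2)[OF level_op_joint_measurable, of x] unfolding G_def by simp
  have error_eq: "slice_error x = (\<integral>\<^sup>+t. indicator {0..s} t * ennreal ((G t)\<^sup>2) \<partial>lborel)"
    unfolding slice_error_def s_def G_def ..
  note cs_G = cauchy_schwarz_set[OF interval G_meas, folded error_eq, OF True]
  have u_int: "set_integrable lborel {0..s} u"
    using unif_mean_square_integrable[OF s0 top[folded s_def] mass] unif_integral_measurable[OF f]
    by (intro cauchy_schwarz_set(1)[OF interval]) (simp_all add: u_def[abs_def])
  have "(\<lambda>t. kpow (H t) k f x) = (\<lambda>t. G t + u t)" by (simp add: G_def u_def level_op_def)
  then have "hybk K \<rho> H k f x = (1/s) * ((LINT t:{0..s}|lborel. G t) + (LINT t:{0..s}|lborel. u t))"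
    unfolding hybk_def s_def[symmetric] using set_integral_add(2)[OF cs_G(1) u_int] by simp
  moreover have "simple_slice K \<rho> f x = (1/s) * (LINT t:{0..s}|lborel. u t)"
    unfolding simple_slice_def s_def[symmetric] u_def ..
  ultimately have "\<rho> x * (hybk K \<rho> H k f x - simple_slice K \<rho> f x)\<^sup>2 = (LINT t:{0..s}|lborel. G t)\<^sup>2 / s"
    unfolding s_def[symmetric] using s0 by (simp add: power2_eq_square algebra_simps)
  then have "ennreal (\<rho> x * (hybk K \<rho> H k f x - simple_slice K \<rho> f x)\<^sup>2) = ennreal ((LINT t:{0..s}|lborel. G t)\<^sup>2) / ennreal s"
    using s0 by (simp add: divide_ennreal)
  also have "\<dots> \<le> slice_error x"
    using cs_G(2) s0 by (intro divide_le_posI_ennreal) simp_all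
  finally show ?thesis .
qed (simp add: top_unique less_top[symmetric])

lemma total_level_mass:
  "(\<integral>\<^sup>+t. indicator {0..} t * level_mass t \<partial>lborel)
    = ennreal (normconst K \<rho>) * (\<integral>\<^sup>+x. ennreal ((f x)\<^sup>2) \<partial>target K \<rho>)"
proof -
  have "(\<lambda>(t::real, x). ennreal ((f x)\<^sup>2)) \<in> borel_measurable (borel \<Otimes>\<^sub>M borel)" by measurable
  from slice_tonelli[OF this]
  have "(\<integral>\<^sup>+t. indicator {0..} t * level_mass t \<partial>lborel)
      = (\<integral>\<^sup>+x. indicator K x * (\<integral>\<^sup>+t. indicator {0..\<rho> x} t * ennreal ((f x)\<^sup>2) \<partial>lborel) \<partial>lborel)"
    unfolding level_mass_def by simp
  also have "\<dots> = (\<integral>\<^sup>+x. indicator K x * (ennreal (\<rho> x) * ennreal ((f x)\<^sup>2)) \<partial>lborel)"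
    by (intro nn_integral_cong) (simp add: nn_integral_slice_const mult.commute split: split_indicator)
  finally show ?thesis by (simp add: nn_integral_density_\<rho>)
qed

text \<open>Cauchy-Schwarz on almost every slice, integrated over K and rearranged by level:
  \<integral>_K \<rho> (H^(k) f - U f)^2 \<le> \<integral>_0^\<infinity> \<integral>_K(t) (H_t^k f - U_t(f))^2 dt.\<close>
lemma weighted_difference_bound:
  assumes mass: "(\<integral>\<^sup>+t. indicator {0..} t * level_mass t \<partial>lborel) < \<infinity>"
  shows "(\<integral>\<^sup>+x. indicator K x * (ennreal (\<rho> x) * ennreal ((hybk K \<rho> H k f x - simple_slice K \<rho> f x)\<^sup>2)) \<partial>lborel)
    \<le> (\<integral>\<^sup>+t. indicator {0..} t * level_error t \<partial>lborel)"
proof -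
  have "(\<integral>\<^sup>+x. indicator K x * (ennreal (\<rho> x) * ennreal ((hybk K \<rho> H k f x - simple_slice K \<rho> f x)\<^sup>2)) \<partial>lborel)
      \<le> (\<integral>\<^sup>+x. indicator K x * slice_error x \<partial>lborel)"
    using ae_top_level_nonnull
  proof (intro nn_integral_mono_AE, elim AE_mp, intro AE_I2 impI)
    fix x assume top: "x \<in> K \<and> 0 < \<rho> x \<longrightarrow> emeasure lborel (lvl K \<rho> (\<rho> x)) \<noteq> 0"
    show "indicator K x * (ennreal (\<rho> x) * ennreal ((hybk K \<rho> H k f x - simple_slice K \<rho> f x)\<^sup>2))
        \<le> indicator K x * slice_error x"
    proof (cases "x \<in> K \<and> 0 < \<rho> x")
      case True
      then show ?thesis using slice_cauchy_schwarz[of x] top mass by (simp add: ennreal_mult)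
    next
      case False
      then have "x \<notin> K \<or> \<rho> x = 0" using \<rho>_nonneg by force
      then show ?thesis by auto
    qed
  qed
  also have "\<dots> = (\<integral>\<^sup>+t. indicator {0..} t * level_error t \<partial>lborel)"
    unfolding slice_error_def[abs_def] level_error_def[abs_def]
    by (rule slice_tonelli) measurable
  finally show ?thesis .
qed

text \<open>Almost every level carries finite mass of f, so the level-wise estimate applies there.\<close>
lemma ae_level_ratio_bound:
  assumes mass: "(\<integral>\<^sup>+t. indicator {0..} t * level_mass t \<partial>lborel) < \<infinity>"
  shows "AE t in lborel. 0 < t \<longrightarrow> level_ratio t \<le> (opnorm (unif K \<rho> t) (level_op t k))\<^sup>2
    \<and> level_error t \<le> level_ratio t * level_mass t"
proof -
  have "AE t in lborel. indicator {0..} t * level_mass t \<noteq> \<infinity>"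
    using mass by (intro nn_integral_PInf_AE) simp_all
  then show ?thesis
    by (elim AE_mp) (auto intro!: AE_I2 level_ratio_bound simp: less_top)
qed

text \<open>Integrating the level-wise ratio over a slice: the definition of \<beta>_k in the form
  \<integral>_0^\<rho>(x) \<parallel>H_t^k - U_t\<parallel>^2 dt \<le> \<rho>(x) R^2.\<close>
lemma slice_ratio_bound:
  assumes mass: "(\<integral>\<^sup>+t. indicator {0..} t * level_mass t \<partial>lborel) < \<infinity>"
    and R: "ennsqrt (\<integral>\<^sup>+t. indicator {0..\<rho> x} t * (opnorm (unif K \<rho> t) (level_op t k))\<^sup>2 / ennreal (\<rho> x) \<partial>lborel) \<le> R"
  shows "(\<integral>\<^sup>+t. indicator {0..\<rho> x} t * level_ratio t \<partial>lborel) \<le> ennreal (\<rho> x) * R\<^sup>2"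
proof (cases "0 < \<rho> x")
  case True
  define r where "r = ennreal (\<rho> x)"
  have r: "r \<noteq> 0" "r \<noteq> \<top>" unfolding r_def using True by auto
  have "(\<integral>\<^sup>+t. indicator {0..\<rho> x} t * level_ratio t \<partial>lborel)
      = (\<integral>\<^sup>+t. r * (indicator {0..\<rho> x} t * level_ratio t / r) \<partial>lborel)"
    using r by (simp add: ennreal_times_divide mult_divide_eq_ennreal mult.commute[of r])
  also have "\<dots> = r * (\<integral>\<^sup>+t. indicator {0..\<rho> x} t * level_ratio t / r \<partial>lborel)"
    by (rule nn_integral_cmult) simp
  also have "\<dots> \<le> r * (\<integral>\<^sup>+t. indicator {0..\<rho> x} t * (opnorm (unif K \<rho> t) (level_op t k))\<^sup>2 / r \<partial>lborel)"
    using ae_level_ratio_bound[OF mass] AE_lborel_singleton[of 0]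
    by (intro mult_left_mono nn_integral_mono_AE, eventually_elim)
      (auto intro!: divide_right_mono_ennreal simp: indicator_def)
  also have "\<dots> \<le> r * R\<^sup>2"
    using R unfolding r_def ennsqrt_le_iff by (rule mult_left_mono) simp
  finally show ?thesis unfolding r_def .
next
  case False
  have "AE t in lborel. indicator {0..\<rho> x} t * level_ratio t = 0"
    using AE_lborel_singleton[of 0] by (rule AE_mp) (use False in \<open>auto intro!: AE_I2 simp: indicator_def\<close>)
  from nn_integral_cong_AE[OF this] show ?thesis by simp
qed

text \<open>The level-wise estimate integrated over all levels and rearranged by points:
  \<integral>_0^\<infinity> \<integral>_K(t) (H_t^k f - U_t(f))^2 dt \<le> R^2 \<integral>_K \<rho> f^2.\<close>
lemma total_level_error_bound:
  assumes mass: "(\<integral>\<^sup>+t. indicator {0..} t * level_mass t \<partial>lborel) < \<infinity>"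
    and R: "\<And>x. x \<in> K \<Longrightarrow> ennsqrt (\<integral>\<^sup>+t. indicator {0..\<rho> x} t *
      (opnorm (unif K \<rho> t) (level_op t k))\<^sup>2 / ennreal (\<rho> x) \<partial>lborel) \<le> R"
  shows "(\<integral>\<^sup>+t. indicator {0..} t * level_error t \<partial>lborel)
    \<le> R\<^sup>2 * (\<integral>\<^sup>+x. indicator K x * (ennreal (\<rho> x) * ennreal ((f x)\<^sup>2)) \<partial>lborel)"
proof -
  have "(\<integral>\<^sup>+t. indicator {0..} t * level_error t \<partial>lborel)
      \<le> (\<integral>\<^sup>+t. indicator {0..} t * (\<integral>\<^sup>+x. indicator (lvl K \<rho> t) x * (level_ratio t * ennreal ((f x)\<^sup>2)) \<partial>lborel) \<partial>lborel)"
    using ae_level_ratio_bound[OF mass] AE_lborel_singleton[of 0]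
    by (intro nn_integral_mono_AE, eventually_elim)
      (auto simp: indicator_def level_mass_def nn_integral_cmult[symmetric] ac_simps)
  also have "\<dots> = (\<integral>\<^sup>+x. indicator K x * (\<integral>\<^sup>+t. indicator {0..\<rho> x} t * (level_ratio t * ennreal ((f x)\<^sup>2)) \<partial>lborel) \<partial>lborel)"
    by (rule slice_tonelli[symmetric]) measurable
  also have "\<dots> = (\<integral>\<^sup>+x. indicator K x * (ennreal ((f x)\<^sup>2) * (\<integral>\<^sup>+t. indicator {0..\<rho> x} t * level_ratio t \<partial>lborel)) \<partial>lborel)"
    by (intro nn_integral_cong) (simp add: nn_integral_cmult[symmetric] ac_simps)
  also have "\<dots> \<le> (\<integral>\<^sup>+x. indicator K x * (ennreal ((f x)\<^sup>2) * (ennreal (\<rho> x) * R\<^sup>2)) \<partial>lborel)"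
    using slice_ratio_bound[OF mass R]
    by (intro nn_integral_mono) (simp add: mult_left_mono split: split_indicator)
  also have "\<dots> = R\<^sup>2 * (\<integral>\<^sup>+x. indicator K x * (ennreal (\<rho> x) * ennreal ((f x)\<^sup>2)) \<partial>lborel)"
    by (simp add: nn_integral_cmult[symmetric] ac_simps)
  finally show ?thesis .
qed

text \<open>Multiplying by the normalising
  constant Z, the chain reads Z \<parallel>D\<parallel>^2 = \<integral>_K \<rho> D^2 \<le> \<integral>_0^\<infinity> \<integral>_K(t) G^2 \<le> R^2 \<integral>_K \<rho> f^2 = R^2 Z \<parallel>f\<parallel>^2.\<close>
lemma difference_norm_bound:
  assumes norm: "(\<integral>\<^sup>+x. ennreal ((f x)\<^sup>2) \<partial>target K \<rho>) \<le> 1"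
    and R: "\<And>x. x \<in> K \<Longrightarrow> ennsqrt (\<integral>\<^sup>+t. indicator {0..\<rho> x} t *
      (opnorm (unif K \<rho> t) (level_op t k))\<^sup>2 / ennreal (\<rho> x) \<partial>lborel) \<le> R"
  shows "(\<integral>\<^sup>+x. ennreal ((hybk K \<rho> H k f x - simple_slice K \<rho> f x)\<^sup>2) \<partial>target K \<rho>) \<le> R\<^sup>2"
proof -
  define Z where "Z = ennreal (normconst K \<rho>)"
  have Z: "Z \<noteq> 0" "Z \<noteq> \<top>" using normconst_pos by (simp_all add: Z_def)
  have "Z * (\<integral>\<^sup>+x. ennreal ((f x)\<^sup>2) \<partial>target K \<rho>) \<le> Z * 1" using norm by (rule mult_left_mono) simp
  then have mass: "(\<integral>\<^sup>+t. indicator {0..} t * level_mass t \<partial>lborel) < \<infinity>"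
    using Z unfolding total_level_mass Z_def[symmetric] by (simp add: le_less_trans less_top)
  have "Z * (\<integral>\<^sup>+x. ennreal ((hybk K \<rho> H k f x - simple_slice K \<rho> f x)\<^sup>2) \<partial>target K \<rho>)
      = (\<integral>\<^sup>+x. indicator K x * (ennreal (\<rho> x) * ennreal ((hybk K \<rho> H k f x - simple_slice K \<rho> f x)\<^sup>2)) \<partial>lborel)"
    unfolding Z_def using slice_difference_measurable by (simp add: nn_integral_density_\<rho>)
  also have "\<dots> \<le> (\<integral>\<^sup>+t. indicator {0..} t * level_error t \<partial>lborel)"
    by (rule weighted_difference_bound[OF mass])
  also have "\<dots> \<le> R\<^sup>2 * (\<integral>\<^sup>+x. indicator K x * (ennreal (\<rho> x) * ennreal ((f x)\<^sup>2)) \<partial>lborel)"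
    by (rule total_level_error_bound[OF mass R])
  also have "\<dots> = Z * (R\<^sup>2 * (\<integral>\<^sup>+x. ennreal ((f x)\<^sup>2) \<partial>target K \<rho>))"
    unfolding Z_def using nn_integral_density_\<rho>[of "\<lambda>x. ennreal ((f x)\<^sup>2)"] by (simp add: ac_simps)
  also have "\<dots> \<le> Z * R\<^sup>2" using norm by (intro mult_left_mono) (auto intro: mult_left_le)
  finally show ?thesis using Z by (simp add: ennreal_mult_le_mult_iff)
qed

end

lemma opnorm_difference_bound:
  "opnorm (target K \<rho>) (\<lambda>f x. hybk K \<rho> H k f x - simple_slice K \<rho> f x)
    \<le> (SUP x\<in>K. ennsqrt (\<integral>\<^sup>+t. indicator {0..\<rho> x} t *
          (opnorm (unif K \<rho> t) (level_op t k))\<^sup>2 / ennreal (\<rho> x) \<partial>lborel))"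
  unfolding opnorm_def[of "target K \<rho>"]
proof (rule SUP_least)
  fix f assume "f \<in> {f \<in> borel_measurable (target K \<rho>). l2norm (target K \<rho>) f \<le> 1}"
  then have f: "f \<in> borel_measurable borel" and norm: "(\<integral>\<^sup>+x. ennreal ((f x)\<^sup>2) \<partial>target K \<rho>) \<le> 1"
    by (simp_all add: target_def l2norm_le_iff)
  show "l2norm (target K \<rho>) (\<lambda>x. hybk K \<rho> H k f x - simple_slice K \<rho> f x)
      \<le> (SUP x\<in>K. ennsqrt (\<integral>\<^sup>+t. indicator {0..\<rho> x} t *
          (opnorm (unif K \<rho> t) (level_op t k))\<^sup>2 / ennreal (\<rho> x) \<partial>lborel))"
    unfolding l2norm_le_iff by (rule difference_norm_bound[OF f norm]) (rule SUP_upper)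
qed

end

theorem lemma3p1:
  fixes K :: "'a::euclidean_space set" and \<rho> :: "'a \<Rightarrow> real"
    and H :: "real \<Rightarrow> 'a \<Rightarrow> 'a measure" and k :: nat
  assumes K_borel: "K \<in> sets borel"
    and \<rho>_meas: "\<rho> \<in> borel_measurable borel"
    and \<rho>_nonneg: "\<forall>x\<in>K. 0 \<le> \<rho> x"
    and Z_pos: "0 < (\<integral>\<^sup>+x. ennreal (indicator K x * \<rho> x) \<partial>lborel)"
    and Z_fin: "(\<integral>\<^sup>+x. ennreal (indicator K x * \<rho> x) \<partial>lborel) < \<infinity>"
    and vol_lvl: "\<forall>t. 0 < t \<and> ereal t < esssup lborel (\<lambda>x. ereal (indicator K x * \<rho> x)) \<longrightarrow>
        0 < emeasure lborel (lvl K \<rho> t) \<and> emeasure lborel (lvl K \<rho> t) < \<infinity>"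
    and H_meas: "(\<lambda>(t, x). H t x) \<in> borel \<Otimes>\<^sub>M borel \<rightarrow>\<^sub>M subprob_algebra borel"
    and H_markov: "\<forall>t\<ge>0. \<forall>x\<in>lvl K \<rho> t. prob_space (H t x) \<and> emeasure (H t x) (lvl K \<rho> t) = 1"
    and H_zero: "\<forall>t\<ge>0. \<forall>x. x \<notin> lvl K \<rho> t \<longrightarrow> emeasure (H t x) (space (H t x)) = 0"
    and H_rev: "\<forall>t\<ge>0. \<forall>A\<in>sets borel. \<forall>B\<in>sets borel.
        (\<integral>\<^sup>+x. emeasure (H t x) B * indicator A x \<partial>unif K \<rho> t)
      = (\<integral>\<^sup>+x. emeasure (H t x) A * indicator B x \<partial>unif K \<rho> t)"
  shows "opnorm (target K \<rho>) (\<lambda>f x. hybk K \<rho> H k f x - simple_slice K \<rho> f x)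
    \<le> (SUP x\<in>K. ennsqrt (\<integral>\<^sup>+t. indicator {0..\<rho> x} t *
          (opnorm (unif K \<rho> t) (\<lambda>f y. kpow (H t) k f y - integral\<^sup>L (unif K \<rho> t) f))\<^sup>2
          / ennreal (\<rho> x) \<partial>lborel))"
proof -
  interpret slice_setting K \<rho> H
    using K_borel \<rho>_meas \<rho>_nonneg Z_pos Z_fin vol_lvl H_meas H_rev by unfold_locales
  show ?thesis using opnorm_difference_bound[of k] unfolding level_op_def .
qed

end
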